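(* Every enhanced Gelfand--Zetlin pattern of rank zero is efficient.
   Context: Let $\lambda=(\lambda_1\ge\dots\ge\lambda_n)$ be a partition. A GZ pattern with top row $\lambda$ is an integer array $a_{ij}$, $0\le i\le n-1$, $1\le j\le n-i$, with $a_{0j}=\lambda_{n+1-j}$ and $a_{i-1,j}\le a_{ij}\le a_{i-1,j+1}$ ($a_{ij}$ sits below $a_{i-1,j}$ and $a_{i-1,j+1}$). An enhanced GZ pattern is such an array with a set of encircled entries and a set of edges, each joining an $a_{ij}$ ($i\ge1$) with $a_{i-1,j}$ or $a_{i-1,j+1}$, such that: (1) row $0$ entries are encircled; (2) entries joined by an edge are equal and the lower one is encircled; (3) for $i\ge1$, $1\le j\le n-i-1$: both $a_{ij},a_{i,j+1}$ are joined to $a_{i-1,j+1}$ iff both are joined to $a_{i+1,j}$; (4) if $a_{0j}=a_{0,j+1}$ then $a_{1j}$ is encircled and joined to both; (5) if $a_{i-1,j}<a_{i-1,j+1}$ and $a_{ij}=a_{i-1,j}$, then $a_{ij}$ is encircled and joined to $a_{i-1,j}$; (6) if $a_{i-1,j}<a_{i-1,j+1}$, $a_{ij}=a_{i-1,j+1}$ and $a_{ij}$ is encircled, then it is joined to $a_{i-1,j+1}$; (7) if $a_{i-1,j}=a_{i-1,j+1}=a_{ij}$ and $a_{i-1,j},a_{i-1,j+1}$ can be connected by a path of edges, then $a_{ij}$ is encircled and joined to both; (8) if $a_{i-1,j}=a_{i-1,j+1}=a_{ij}$ and $a_{ij}$ is encircled, then it is joined to at least one of them. The rank is the number of non-encircled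 entries. The pattern is inefficient if it contains $a_{i-1,j}=a_{i-1,j+1}=a_{ij}$ with no edge between $a_{ij}$ and $a_{i-1,j+1}$, and efficient otherwise. *)

theory Defs
  imports Main
begin

type_synonym pos = "nat \<times> nat"

definition gz_pos :: "nat \<Rightarrow> pos set" where
  "gz_pos n = {(i, j). i < n \<and> 1 \<le> j \<and> j \<le> n - i}"

definition is_partition :: "nat \<Rightarrow> (nat \<Rightarrow> int) \<Rightarrow> bool" where
  "is_partition n lam \<longleftrightarrow> (\<forall>k. 1 \<le> k \<and> k < n \<longrightarrow> lam (Suc k) \<le> lam k) \<and> (n \<ge> 1 \<longrightarrow> 0 \<le> lam n)"

definition gz_pattern :: "nat \<Rightarrow> (nat \<Rightarrow> int) \<Rightarrow> (nat \<Rightarrow> nat \<Rightarrow> int) \<Rightarrow> bool" where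
  "gz_pattern n lam a \<longleftrightarrow>
     (\<forall>j. 1 \<le> j \<and> j \<le> n \<longrightarrow> a 0 j = lam (n + 1 - j)) \<and>
     (\<forall>i j. 1 \<le> i \<and> i < n \<and> 1 \<le> j \<and> j \<le> n - i \<longrightarrow>
        a (i - 1) j \<le> a i j \<and> a i j \<le> a (i - 1) (j + 1))"

text \<open>Edges are stored as pairs (lower entry, upper entry).
  A path of edges is a path in the undirected graph given by the edges.\<close>
definition enhanced_gz :: "nat \<Rightarrow> (nat \<Rightarrow> int) \<Rightarrow> (nat \<Rightarrow> nat \<Rightarrow> int)
    \<Rightarrow> pos set \<Rightarrow> (pos \<times> pos) set \<Rightarrow> bool" where
  "enhanced_gz n lam a C E \<longleftrightarrow>
     gz_pattern n lam a \<and>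
     C \<subseteq> gz_pos n \<and>
     (\<forall>e\<in>E. \<exists>i j. 1 \<le> i \<and> (i, j) \<in> gz_pos n \<and> fst e = (i, j) \<and>
                 (snd e = (i - 1, j) \<or> snd e = (i - 1, j + 1))) \<and>
     \<comment> \<open>(1)\<close>
     (\<forall>j. 1 \<le> j \<and> j \<le> n \<longrightarrow> (0, j) \<in> C) \<and>
     \<comment> \<open>(2)\<close>
     (\<forall>p q. (p, q) \<in> E \<longrightarrow> a (fst p) (snd p) = a (fst q) (snd q) \<and> p \<in> C) \<and>
     \<comment> \<open>(3)\<close>
     (\<forall>i j. 1 \<le> i \<and> 1 \<le> j \<and> j + 1 \<le> n - i \<longrightarrow>
        ((((i, j), (i - 1, j + 1)) \<in> E \<and> ((i, j + 1), (i - 1, j + 1)) \<in> E) \<longleftrightarrow>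
         (((i + 1, j), (i, j)) \<in> E \<and> ((i + 1, j), (i, j + 1)) \<in> E))) \<and>
     \<comment> \<open>(4)\<close>
     (\<forall>j. 1 \<le> j \<and> j + 1 \<le> n \<and> a 0 j = a 0 (j + 1) \<longrightarrow>
        (1, j) \<in> C \<and> ((1, j), (0, j)) \<in> E \<and> ((1, j), (0, j + 1)) \<in> E) \<and>
     \<comment> \<open>(5)--(8): for entries a_{ij} with i \<ge> 1\<close>
     (\<forall>i j. 1 \<le> i \<and> (i, j) \<in> gz_pos n \<longrightarrow>
        \<comment> \<open>(5)\<close>
        ((a (i - 1) j < a (i - 1) (j + 1) \<and> a i j = a (i - 1) j) \<longrightarrow>
           (i, j) \<in> C \<and> ((i, j), (i - 1, j)) \<in> E) \<and>
        \<comment> \<open>(6)\<close>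
        ((a (i - 1) j < a (i - 1) (j + 1) \<and> a i j = a (i - 1) (j + 1) \<and> (i, j) \<in> C) \<longrightarrow>
           ((i, j), (i - 1, j + 1)) \<in> E) \<and>
        \<comment> \<open>(7)\<close>
        ((a (i - 1) j = a (i - 1) (j + 1) \<and> a i j = a (i - 1) j \<and>
          ((i - 1, j), (i - 1, j + 1)) \<in> (E \<union> E\<inverse>)\<^sup>*) \<longrightarrow>
           (i, j) \<in> C \<and> ((i, j), (i - 1, j)) \<in> E \<and> ((i, j), (i - 1, j + 1)) \<in> E) \<and>
        \<comment> \<open>(8)\<close>
        ((a (i - 1) j = a (i - 1) (j + 1) \<and> a i j = a (i - 1) j \<and> (i, j) \<in> C) \<longrightarrow>
           ((i, j), (i - 1, j)) \<in> E \<or> ((i, j), (i - 1, j + 1)) \<in> E))"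

definition gz_rank :: "nat \<Rightarrow> pos set \<Rightarrow> nat" where
  "gz_rank n C = card (gz_pos n - C)"

definition inefficient :: "nat \<Rightarrow> (nat \<Rightarrow> nat \<Rightarrow> int) \<Rightarrow> (pos \<times> pos) set \<Rightarrow> bool" where
  "inefficient n a E \<longleftrightarrow>
     (\<exists>i j. 1 \<le> i \<and> (i, j) \<in> gz_pos n \<and>
        a (i - 1) j = a (i - 1) (j + 1) \<and> a i j = a (i - 1) j \<and>
        ((i, j), (i - 1, j + 1)) \<notin> E)"

definition efficient :: "nat \<Rightarrow> (nat \<Rightarrow> nat \<Rightarrow> int) \<Rightarrow> (pos \<times> pos) set \<Rightarrow> bool" where
  "efficient n a E \<longleftrightarrow> \<not> inefficient n a E"

end

theory Submission
  imports Defs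
begin

text \<open>In a pattern of rank zero every entry is encircled.  By induction on the row one
  shows that two equal neighbours a_{ij} = a_{i,j+1} are always connected by a path of edges:
  in row 0 this is rule (4); below it, interlacing forces both entries to equal a_{i-1,j+1},
  and each of them is joined to it, by (5) or (6) if its other upper neighbour is different
  and by the induction hypothesis and (7) otherwise.  Applied to the upper row of a triangle
  a_{i-1,j} = a_{i-1,j+1} = a_{ij}, rule (7) then supplies the edge from a_{ij} to a_{i-1,j+1}
  whose absence would make the pattern inefficient.\<close>

lemma finite_gz_pos: "finite (gz_pos n)"
proof (rule finite_subset)
  show "gz_pos n \<subseteq> {..<n} \<times> {..n}" by (auto simp: gz_pos_def)
qed auto

lemma gz_rank_zero_imp_all_encircled:
  assumes "gz_rank n C = 0"
  shows "gz_pos n \<subseteq> C"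
  using assms finite_gz_pos by (simp add: gz_rank_def)

lemma enhanced_gz_interlacing:
  assumes "enhanced_gz n lam a C E" and "(Suc i, j) \<in> gz_pos n"
  shows "a i j \<le> a (Suc i) j" and "a (Suc i) j \<le> a i (j + 1)"
proof -
  have "gz_pattern n lam a" using assms(1) by (simp add: enhanced_gz_def)
  then have "\<And>i j. 1 \<le> i \<Longrightarrow> i < n \<Longrightarrow> 1 \<le> j \<Longrightarrow> j \<le> n - i \<Longrightarrow>
      a (i - 1) j \<le> a i j \<and> a i j \<le> a (i - 1) (j + 1)"
    unfolding gz_pattern_def by blast
  from this[of "Suc i" j] show "a i j \<le> a (Suc i) j" and "a (Suc i) j \<le> a i (j + 1)"
    using assms(2) unfolding gz_pos_def by auto
qed

lemma enhanced_gz_top_equal_joined: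
  assumes "enhanced_gz n lam a C E" and "1 \<le> j" "j + 1 \<le> n" and "a 0 j = a 0 (j + 1)"
  shows "((1, j), (0, j)) \<in> E" and "((1, j), (0, j + 1)) \<in> E"
proof -
  have "\<And>j. 1 \<le> j \<Longrightarrow> j + 1 \<le> n \<Longrightarrow> a 0 j = a 0 (j + 1) \<Longrightarrow>
      ((1, j), (0, j)) \<in> E \<and> ((1, j), (0, j + 1)) \<in> E"
    using assms(1) unfolding enhanced_gz_def by blast
  then show "((1, j), (0, j)) \<in> E" and "((1, j), (0, j + 1)) \<in> E"
    using assms(2-) by simp_all
qed

lemma enhanced_gz_joined_upper_left_strict:
  assumes "enhanced_gz n lam a C E" and "(Suc i, j) \<in> gz_pos n"
    and "a i j < a i (j + 1)" and "a (Suc i) j = a i j"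
  shows "((Suc i, j), (i, j)) \<in> E"
proof -
  have "\<And>i j. 1 \<le> i \<Longrightarrow> (i, j) \<in> gz_pos n \<Longrightarrow> a (i - 1) j < a (i - 1) (j + 1) \<Longrightarrow>
      a i j = a (i - 1) j \<Longrightarrow> ((i, j), (i - 1, j)) \<in> E"
    using assms(1) unfolding enhanced_gz_def by blast
  from this[of "Suc i" j] show ?thesis using assms(2-) by simp
qed

lemma enhanced_gz_joined_upper_right_strict:
  assumes "enhanced_gz n lam a C E" and "(Suc i, j) \<in> gz_pos n" and "(Suc i, j) \<in> C"
    and "a i j < a i (j + 1)" and "a (Suc i) j = a i (j + 1)"
  shows "((Suc i, j), (i, j + 1)) \<in> E"
proof -
  have "\<And>i j. 1 \<le> i \<Longrightarrow> (i, j) \<in> gz_pos n \<Longrightarrow> a (i - 1) j < a (i - 1) (j + 1) \<Longrightarrow>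
      a i j = a (i - 1) (j + 1) \<Longrightarrow> (i, j) \<in> C \<Longrightarrow> ((i, j), (i - 1, j + 1)) \<in> E"
    using assms(1) unfolding enhanced_gz_def by blast
  from this[of "Suc i" j] show ?thesis using assms(2-) by simp
qed

lemma enhanced_gz_joined_both_if_connected:
  assumes "enhanced_gz n lam a C E" and "(Suc i, j) \<in> gz_pos n"
    and "a i j = a i (j + 1)" and "a (Suc i) j = a i j"
    and "((i, j), (i, j + 1)) \<in> (E \<union> E\<inverse>)\<^sup>*"
  shows "((Suc i, j), (i, j)) \<in> E" and "((Suc i, j), (i, j + 1)) \<in> E"
proof -
  have "\<And>i j. 1 \<le> i \<Longrightarrow> (i, j) \<in> gz_pos n \<Longrightarrow> a (i - 1) j = a (i - 1) (j + 1) \<Longrightarrow>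
      a i j = a (i - 1) j \<Longrightarrow> ((i - 1, j), (i - 1, j + 1)) \<in> (E \<union> E\<inverse>)\<^sup>* \<Longrightarrow>
      ((i, j), (i - 1, j)) \<in> E \<and> ((i, j), (i - 1, j + 1)) \<in> E"
    using assms(1) unfolding enhanced_gz_def by blast
  from this[of "Suc i" j] show "((Suc i, j), (i, j)) \<in> E" and "((Suc i, j), (i, j + 1)) \<in> E"
    using assms(2-) by simp_all
qed

lemma enhanced_gz_joined_upper_left:
  assumes enh: "enhanced_gz n lam a C E" and pos: "(Suc i, j) \<in> gz_pos n"
    and eq: "a (Suc i) j = a i j"
    and conn: "a i j = a i (j + 1) \<Longrightarrow> ((i, j), (i, j + 1)) \<in> (E \<union> E\<inverse>)\<^sup>*"
  shows "((Suc i, j), (i, j)) \<in> E"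
proof (cases "a i j < a i (j + 1)")
  case True
  then show ?thesis using enhanced_gz_joined_upper_left_strict[OF enh pos _ eq] by blast
next
  case False
  then have "a i j = a i (j + 1)" using enhanced_gz_interlacing[OF enh pos] eq by simp
  then show ?thesis using enhanced_gz_joined_both_if_connected[OF enh pos] eq conn by blast
qed

lemma enhanced_gz_joined_upper_right:
  assumes enh: "enhanced_gz n lam a C E" and pos: "(Suc i, j) \<in> gz_pos n"
    and enc: "(Suc i, j) \<in> C" and eq: "a (Suc i) j = a i (j + 1)"
    and conn: "a i j = a i (j + 1) \<Longrightarrow> ((i, j), (i, j + 1)) \<in> (E \<union> E\<inverse>)\<^sup>*"
  shows "((Suc i, j), (i, j + 1)) \<in> E"
proof (cases "a i j < a i (j + 1)")
  case True
  then show ?thesis using enhanced_gz_joined_upper_right_strict[OF enh pos enc _ eq] by blast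
next
  case False
  then have "a i j = a i (j + 1)" using enhanced_gz_interlacing[OF enh pos] eq by simp
  then show ?thesis using enhanced_gz_joined_both_if_connected[OF enh pos] eq conn by simp
qed

lemma path_via_common_upper:
  assumes "(p, q) \<in> E" and "(r, q) \<in> E"
  shows "(p, r) \<in> (E \<union> E\<inverse>)\<^sup>*"
  using assms by (meson UnI1 UnI2 converseI converse_rtrancl_into_rtrancl r_into_rtrancl)

lemma path_via_common_lower:
  assumes "(q, p) \<in> E" and "(q, r) \<in> E"
  shows "(p, r) \<in> (E \<union> E\<inverse>)\<^sup>*"
  using assms by (meson UnI1 UnI2 converseI converse_rtrancl_into_rtrancl r_into_rtrancl)

lemma enhanced_gz_equal_neighbours_connected:
  assumes enh: "enhanced_gz n lam a C E" and all_enc: "gz_pos n \<subseteq> C"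
  shows "1 \<le> j \<Longrightarrow> j + 1 \<le> n - i \<Longrightarrow> a i j = a i (j + 1) \<Longrightarrow>
    ((i, j), (i, j + 1)) \<in> (E \<union> E\<inverse>)\<^sup>*"
proof (induction i arbitrary: j)
  case 0
  then have "((1, j), (0, j)) \<in> E" and "((1, j), (0, j + 1)) \<in> E"
    using enhanced_gz_top_equal_joined[OF enh] by auto
  then show ?case by (rule path_via_common_lower)
next
  case (Suc i)
  have pos_l: "(Suc i, j) \<in> gz_pos n" and pos_r: "(Suc i, j + 1) \<in> gz_pos n"
    using Suc.prems by (auto simp: gz_pos_def)
  have "a i (j + 1) \<le> a (Suc i) (j + 1)" and "a (Suc i) j \<le> a i (j + 1)"
    using enhanced_gz_interlacing[OF enh pos_l] enhanced_gz_interlacing[OF enh pos_r] by auto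
  then have eq_l: "a (Suc i) j = a i (j + 1)" and eq_r: "a (Suc i) (j + 1) = a i (j + 1)"
    using Suc.prems(3) by auto
  have "((Suc i, j), (i, j + 1)) \<in> E"
    using enhanced_gz_joined_upper_right[OF enh pos_l _ eq_l] pos_l all_enc Suc.IH Suc.prems(1,2)
    by auto
  moreover have "((Suc i, j + 1), (i, j + 1)) \<in> E"
    using enhanced_gz_joined_upper_left[OF enh pos_r eq_r] Suc.IH Suc.prems(2) by simp
  ultimately show ?case by (rule path_via_common_upper)
qed

theorem proposition4p1:
  fixes n :: nat and lam :: "nat \<Rightarrow> int" and a :: "nat \<Rightarrow> nat \<Rightarrow> int"
    and C :: "(nat \<times> nat) set" and E :: "((nat \<times> nat) \<times> (nat \<times> nat)) set"
  assumes "is_partition n lam"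
    and "enhanced_gz n lam a C E"
    and "gz_rank n C = 0"
  shows "efficient n a E"
  unfolding efficient_def inefficient_def
proof clarify
  fix i j
  assume "1 \<le> i" and pos: "(i, j) \<in> gz_pos n" and upper: "a (i - 1) j = a (i - 1) (j + 1)"
    and eq: "a i j = a (i - 1) j" and no_edge: "((i, j), (i - 1, j + 1)) \<notin> E"
  then obtain k where i: "i = Suc k" by (cases i) auto
  have "gz_pos n \<subseteq> C" using assms(3) by (rule gz_rank_zero_imp_all_encircled)
  then have "((k, j), (k, j + 1)) \<in> (E \<union> E\<inverse>)\<^sup>*"
    using enhanced_gz_equal_neighbours_connected[OF assms(2)] pos upper
    by (auto simp: i gz_pos_def)
  then have "((i, j), (i - 1, j + 1)) \<in> E"
    using enhanced_gz_joined_both_if_connected[OF assms(2)] pos upper eq by (simp add: i)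
  with no_edge show False by contradiction
qed

end
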